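(* Let $P$ be a nondeterministic probabilistic program with CFG $(V_p,V_r,L,\to)$, linear invariant $I$, and a PUCS $h$ with respect to $I$ that is nonnegative, i.e. $h(\ell,\mathbf{w})\ge 0$ for all labels $\ell$ and all $\mathbf{w}\in I(\ell)$. If all step-wise costs in $P$ are nonnegative, i.e. $R_\ell(\mathbf{w})\ge 0$ for every tick label $\ell$ and every $\mathbf{w}\in I(\ell)$, then $\mathrm{supval}(\mathbf{v})\le h(\ell_{in},\mathbf{v})$ for all initial valuations $\mathbf{v}\in I(\ell_{in})$. (No bounded update or concentration assumption is required.)
   Context: Program model. A program is given by its control-flow graph (CFG) $(V_p,V_r,L,\to)$: $V_p$ is a finite set of real-valued program variables, $V_r$ a finite set of sampling variables, each $r\in V_r$ having a fixed probability distribution on $\mathbb{R}$ (assumed such that all expectations appearing in the pre-expectation below are finite); a valuation over a set $V$ is a map $V\to\mathbb{R}$, and $\mathrm{Val}(V)$ is the set of valuations. The finite label set $L$ is partitioned into assignment labels $L_a$, branching labels $L_b$, probabilistic labels $L_p$, nondeterministic labels $L_{nd}$, tick labels $L_t$, and a terminal label $\ell_{out}$; $\ell_{in}$ is the initial label. An assignment label $\ell$ has a unique successor $\ell'$ and a polynomial update function $F_\ell:\mathrm{Val}(V_p)\times\mathrm{Val}(V_r)\to\mathrm{Val}(V_p)$; a branching label has a condition $\phi$ over $V_p$ with successor $\ell_1$ if $\phi$ holds and $\ell_2$ otherwise; a probabilistic label has $p\in[0,1]$ and goes to successor $\ell_1$ with probability $p$ and $\ell_2$ with probability $1-p$; a nondeterministic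 label has two successors; a tick label has a unique successor $\ell'$ and a polynomial cost function $R_\ell:\mathrm{Val}(V_p)\to\mathbb{R}$. Only assignments change the valuation. A configuration is a pair $(\ell,\mathbf{v})$; a run is an infinite sequence of configurations. A scheduler maps every finite run ending in a configuration with a nondeterministic label to one of that label's successors. Given a scheduler $\sigma$ and initial valuation $\mathbf{v}$, runs start at $(\ell_{in},\mathbf{v})$ and evolve as follows: at $\ell_{out}$ the run stays forever; at an assignment label a fresh valuation $\mathbf{u}$ of $V_r$ is sampled independently (each $r$ from its distribution) and the next configuration is $(\ell',F_\ell(\mathbf{v},\mathbf{u}))$; branching/probabilistic/nondeterministic/tick labels move to the successor determined by the condition/coin/scheduler/unique successor without changing the valuation. This yields a probability measure $\mathbb{P}^\sigma_{\mathbf{v}}$ on runs with expectation $\mathbb{E}^\sigma_{\mathbf{v}}$. For a run $\{(\ell_n,\mathbf{v}_n)\}_n$, the step cost is $C_m=R_{\ell_m}(\mathbf{v}_m)$ if $\ell_m\in L_t$ and $C_m=0$ otherwise; $C_\infty=\sum_{m=0}^\infty C_m$; and $\mathrm{supval}(\mathbf{v})=\sup_\sigma\mathbb{E}^\sigma_{\mathbf{v}}(C_\infty)$. Invariant. A linear invariant is a map $I$ assigning to each label a finite union of polyhedra $I(\ell)\subseteq\mathrm{Val}(V_p)$ such that for every $\mathbf{v}\in I(\ell_{in})$, every configuration $(\ell,\mathbf{w})$ reachable from $(\ell_{in},\mathbf{v})$ satisfies $\mathbf{w}\in I(\ell)$. Pre-expectation. For $h:L\times\mathrm{Val}(V_p)\to\mathbb{R}$,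 $\mathrm{pre}_h(\ell,\mathbf{v})$ is: $h(\ell,\mathbf{v})$ if $\ell=\ell_{out}$; $\mathbb{E}_{\mathbf{u}}[h(\ell',F_\ell(\mathbf{v},\mathbf{u}))]$ if $\ell\in L_a$ (with $\mathbf{u}$ distributed as the sampling variables); $\mathbf{1}_{\mathbf{v}\models\phi}h(\ell_1,\mathbf{v})+\mathbf{1}_{\mathbf{v}\not\models\phi}h(\ell_2,\mathbf{v})$ if $\ell\in L_b$; $p\,h(\ell_1,\mathbf{v})+(1-p)h(\ell_2,\mathbf{v})$ if $\ell\in L_p$; $R_\ell(\mathbf{v})+h(\ell',\mathbf{v})$ if $\ell\in L_t$; the maximum of $h(\ell'',\mathbf{v})$ over the successors $\ell''$ of $\ell$ if $\ell\in L_{nd}$. PUCS. A polynomial upper cost supermartingale (PUCS) of degree $d$ w.r.t. $I$ is $h:L\times\mathrm{Val}(V_p)\to\mathbb{R}$ such that (C1) each $h(\ell,\cdot)$ is a polynomial of degree at most $d$ in the program variables; (C2) $h(\ell_{out},\mathbf{v})=0$ for all $\mathbf{v}$; (C3) $\mathrm{pre}_h(\ell,\mathbf{v})\le h(\ell,\mathbf{v})$ for all $\ell\ne\ell_{out}$ and all $\mathbf{v}\in I(\ell)$. *)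

theory Defs
  imports "HOL-Probability.Probability"
begin

type_synonym 'a val = "'a \<Rightarrow> real"

definition poly_deg_le :: "nat \<Rightarrow> ('a::finite val \<Rightarrow> real) \<Rightarrow> bool" where
  "poly_deg_le d f \<longleftrightarrow>
     (\<exists>c :: ('a \<Rightarrow> nat) \<Rightarrow> real.
        finite {\<alpha>. c \<alpha> \<noteq> 0} \<and>
        (\<forall>\<alpha>. c \<alpha> \<noteq> 0 \<longrightarrow> (\<Sum>x\<in>UNIV. \<alpha> x) \<le> d) \<and>
        (\<forall>v. f v = (\<Sum>\<alpha>\<in>{\<alpha>. c \<alpha> \<noteq> 0}. c \<alpha> * (\<Prod>x\<in>UNIV. v x ^ \<alpha> x))))"

definition is_poly :: "('a::finite val \<Rightarrow> real) \<Rightarrow> bool" where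
  "is_poly f \<longleftrightarrow> (\<exists>d. poly_deg_le d f)"

text \<open>Each label carries its kind and data: assignment (successor, update), branching
  (condition as a set of valuations, then/else successor), probabilistic (p, two successors),
  nondeterministic (two successors), tick (cost function, successor), terminal.\<close>
datatype ('l, 'v, 'r) node =
    Assign 'l "'v val \<Rightarrow> 'r val \<Rightarrow> 'v val"
  | Branch "'v val set" 'l 'l
  | Prob real 'l 'l
  | NDet 'l 'l
  | Tick "'v val \<Rightarrow> real" 'l
  | Out

definition wf_program ::
  "('l::finite \<Rightarrow> ('l, 'v::finite, 'r::finite) node) \<Rightarrow> 'l \<Rightarrow> ('r \<Rightarrow> real measure) \<Rightarrow> bool" where
  "wf_program G lout D \<longleftrightarrow>
     (\<forall>l. G l = Out \<longleftrightarrow> l = lout) \<and>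
     (\<forall>r. prob_space (D r) \<and> sets (D r) = sets borel) \<and>
     (\<forall>l l' F. G l = Assign l' F \<longrightarrow>
         (\<forall>x. is_poly (\<lambda>z :: ('v + 'r) val. F (z \<circ> Inl) (z \<circ> Inr) x))) \<and>
     (\<forall>l \<phi> l1 l2. G l = Branch \<phi> l1 l2 \<longrightarrow> \<phi> \<in> sets (PiM UNIV (\<lambda>_::'v. borel))) \<and>
     (\<forall>l p l1 l2. G l = Prob p l1 l2 \<longrightarrow> 0 \<le> p \<and> p \<le> 1) \<and>
     (\<forall>l R l'. G l = Tick R l' \<longrightarrow> is_poly R)"

definition samp :: "('r \<Rightarrow> real measure) \<Rightarrow> 'r val measure" where
  "samp D = PiM UNIV D"

definition polyhedron :: "'v::finite val set \<Rightarrow> bool" where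
  "polyhedron P \<longleftrightarrow> (\<exists>A :: ('v val \<times> real) set. finite A \<and>
       P = {v. \<forall>(a, b)\<in>A. (\<Sum>x\<in>UNIV. a x * v x) \<le> b})"

definition fin_union_polyhedra :: "'v::finite val set \<Rightarrow> bool" where
  "fin_union_polyhedra S \<longleftrightarrow> (\<exists>F. finite F \<and> (\<forall>P\<in>F. polyhedron P) \<and> S = \<Union>F)"

definition supp_real :: "real measure \<Rightarrow> real set" where
  "supp_real M = {x. \<forall>e>0. 0 < measure M {x - e<..<x + e}}"

definition succs ::
  "('l \<Rightarrow> ('l, 'v, 'r) node) \<Rightarrow> ('r \<Rightarrow> real measure) \<Rightarrow> 'l \<times> 'v val \<Rightarrow> ('l \<times> 'v val) set" where
  "succs G D c = (case c of (l, v) \<Rightarrow>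
     (case G l of
        Out \<Rightarrow> {(l, v)}
      | Assign l' F \<Rightarrow> {(l', F v u) | u. \<forall>r. u r \<in> supp_real (D r)}
      | Branch \<phi> l1 l2 \<Rightarrow> {(if v \<in> \<phi> then l1 else l2, v)}
      | Prob p l1 l2 \<Rightarrow> (if 0 < p then {(l1, v)} else {}) \<union> (if p < 1 then {(l2, v)} else {})
      | NDet l1 l2 \<Rightarrow> {(l1, v), (l2, v)}
      | Tick R l' \<Rightarrow> {(l', v)}))"

definition reachable ::
  "('l \<Rightarrow> ('l, 'v, 'r) node) \<Rightarrow> ('r \<Rightarrow> real measure) \<Rightarrow> 'l \<times> 'v val \<Rightarrow> 'l \<times> 'v val \<Rightarrow> bool" where
  "reachable G D c c' \<longleftrightarrow> (c, c') \<in> {(a, b). b \<in> succs G D a}\<^sup>*"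

definition linear_invariant ::
  "('l \<Rightarrow> ('l, 'v::finite, 'r) node) \<Rightarrow> ('r \<Rightarrow> real measure) \<Rightarrow> 'l \<Rightarrow> ('l \<Rightarrow> 'v val set) \<Rightarrow> bool" where
  "linear_invariant G D lin I \<longleftrightarrow>
     (\<forall>l. fin_union_polyhedra (I l)) \<and>
     (\<forall>v\<in>I lin. \<forall>l w. reachable G D (lin, v) (l, w) \<longrightarrow> w \<in> I l)"

text \<open>Randomness of one step: a sample of all sampling variables and a uniform coin in [0,1]
  (used for probabilistic labels: go to the first successor iff coin < p).\<close>
definition step_space :: "('r \<Rightarrow> real measure) \<Rightarrow> ('r val \<times> real) measure" where
  "step_space D = samp D \<Otimes>\<^sub>M uniform_measure lborel {0..1::real}"

definition rand_space :: "('r \<Rightarrow> real measure) \<Rightarrow> (nat \<Rightarrow> 'r val \<times> real) measure" where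
  "rand_space D = PiM UNIV (\<lambda>_::nat. step_space D)"

definition next_conf ::
  "('l \<Rightarrow> ('l, 'v, 'r) node) \<Rightarrow> (('l \<times> 'v val) list \<Rightarrow> 'l) \<Rightarrow> ('l \<times> 'v val) list
     \<Rightarrow> 'r val \<times> real \<Rightarrow> 'l \<times> 'v val" where
  "next_conf G \<sigma> \<rho> s = (case last \<rho> of (l, v) \<Rightarrow> case s of (u, c) \<Rightarrow>
     (case G l of
        Out \<Rightarrow> (l, v)
      | Assign l' F \<Rightarrow> (l', F v u)
      | Branch \<phi> l1 l2 \<Rightarrow> (if v \<in> \<phi> then l1 else l2, v)
      | Prob p l1 l2 \<Rightarrow> (if c < p then l1 else l2, v)
      | NDet l1 l2 \<Rightarrow> (\<sigma> \<rho>, v)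
      | Tick R l' \<Rightarrow> (l', v)))"

text \<open>The finite run prefix of length n+1.\<close>
fun hist ::
  "('l \<Rightarrow> ('l, 'v, 'r) node) \<Rightarrow> 'l \<Rightarrow> (('l \<times> 'v val) list \<Rightarrow> 'l) \<Rightarrow> 'v val
     \<Rightarrow> (nat \<Rightarrow> 'r val \<times> real) \<Rightarrow> nat \<Rightarrow> ('l \<times> 'v val) list" where
  "hist G lin \<sigma> v \<omega> 0 = [(lin, v)]"
| "hist G lin \<sigma> v \<omega> (Suc n) = hist G lin \<sigma> v \<omega> n @ [next_conf G \<sigma> (hist G lin \<sigma> v \<omega> n) (\<omega> n)]"

definition conf where
  "conf G lin \<sigma> v \<omega> n = last (hist G lin \<sigma> v \<omega> n)"

definition step_cost :: "('l \<Rightarrow> ('l, 'v, 'r) node) \<Rightarrow> 'l \<times> 'v val \<Rightarrow> real" where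
  "step_cost G c = (case c of (l, v) \<Rightarrow> (case G l of Tick R l' \<Rightarrow> R v | _ \<Rightarrow> 0))"

definition total_cost where
  "total_cost G lin \<sigma> v \<omega> = lim (\<lambda>n. ereal (\<Sum>m<n. step_cost G (conf G lin \<sigma> v \<omega> m)))"

definition ereal_expect :: "'a measure \<Rightarrow> ('a \<Rightarrow> ereal) \<Rightarrow> ereal" where
  "ereal_expect M X = enn2ereal (\<integral>\<^sup>+ \<omega>. e2ennreal (X \<omega>) \<partial>M) - enn2ereal (\<integral>\<^sup>+ \<omega>. e2ennreal (- X \<omega>) \<partial>M)"

definition valid_sched :: "('l \<Rightarrow> ('l, 'v, 'r) node) \<Rightarrow> (('l \<times> 'v val) list \<Rightarrow> 'l) \<Rightarrow> bool" where
  "valid_sched G \<sigma> \<longleftrightarrow> (\<forall>\<rho> l1 l2. \<rho> \<noteq> [] \<longrightarrow> G (fst (last \<rho>)) = NDet l1 l2 \<longrightarrow> \<sigma> \<rho> \<in> {l1, l2})"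

text \<open>Measurability of the induced run process (so that the probability measure on runs exists).\<close>
definition admissible where
  "admissible G D lin \<sigma> v \<longleftrightarrow>
     (\<forall>n. (\<lambda>\<omega>. fst (conf G lin \<sigma> v \<omega> n)) \<in> measurable (rand_space D) (count_space UNIV) \<and>
          (\<forall>x. (\<lambda>\<omega>. snd (conf G lin \<sigma> v \<omega> n) x) \<in> borel_measurable (rand_space D)))"

definition supval ::
  "('l \<Rightarrow> ('l, 'v, 'r) node) \<Rightarrow> ('r \<Rightarrow> real measure) \<Rightarrow> 'l \<Rightarrow> 'v val \<Rightarrow> ereal" where
  "supval G D lin v = (SUP \<sigma>\<in>{\<sigma>. valid_sched G \<sigma> \<and> admissible G D lin \<sigma> v}.
                         ereal_expect (rand_space D) (total_cost G lin \<sigma> v))"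

definition pre ::
  "('l \<Rightarrow> ('l, 'v, 'r) node) \<Rightarrow> ('r \<Rightarrow> real measure) \<Rightarrow> ('l \<Rightarrow> 'v val \<Rightarrow> real) \<Rightarrow> 'l \<Rightarrow> 'v val \<Rightarrow> real" where
  "pre G D h l v =
     (case G l of
        Out \<Rightarrow> h l v
      | Assign l' F \<Rightarrow> (\<integral>u. h l' (F v u) \<partial>samp D)
      | Branch \<phi> l1 l2 \<Rightarrow> (if v \<in> \<phi> then h l1 v else h l2 v)
      | Prob p l1 l2 \<Rightarrow> p * h l1 v + (1 - p) * h l2 v
      | NDet l1 l2 \<Rightarrow> max (h l1 v) (h l2 v)
      | Tick R l' \<Rightarrow> R v + h l' v)"

definition PUCS ::
  "('l \<Rightarrow> ('l, 'v::finite, 'r) node) \<Rightarrow> ('r \<Rightarrow> real measure) \<Rightarrow> ('l \<Rightarrow> 'v val set) \<Rightarrow> 'l \<Rightarrow> nat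
     \<Rightarrow> ('l \<Rightarrow> 'v val \<Rightarrow> real) \<Rightarrow> bool" where
  "PUCS G D I lout d h \<longleftrightarrow>
     (\<forall>l. poly_deg_le d (h l)) \<and>
     (\<forall>v. h lout v = 0) \<and>
     (\<forall>l. l \<noteq> lout \<longrightarrow> (\<forall>v\<in>I l. pre G D h l v \<le> h l v))"

end

theory Submission
  imports Defs
begin

text \<open>Along a run let S(n) = C(0) + ... + C(n-1) + h(l(n), v(n)). The PUCS inequality
  pre_h <= h says precisely that one program step, whatever the scheduler chooses, does not
  increase the expectation of S; conditioning on the first step and handing the shifted
  scheduler to the rest of the run gives E[S(n)] <= h(l_in, v) by induction on n.
  Almost surely every visited configuration lies in the invariant, where costs and h are
  nonnegative; so the partial sums of costs are nondecreasing and bounded by S(n), and monotone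
  convergence yields E[C_inf] <= h(l_in, v) for every scheduler.\<close>

section \<open>Measure-theoretic facts\<close>

lemma AE_in_supp_real:
  fixes M :: "real measure"
  assumes "prob_space M" and sets_M: "sets M = sets borel"
  shows "AE x in M. x \<in> supp_real M"
proof -
  interpret prob_space M by fact
  define A where "A = (\<lambda>(q1::rat, q2::rat).
    if measure M {real_of_rat q1<..<real_of_rat q2} = 0 then {real_of_rat q1<..<real_of_rat q2} else {})"
  have "A q \<in> null_sets M" for q
    using sets_M by (cases q) (auto simp: A_def emeasure_eq_measure)
  then have null: "(\<Union>q. A q) \<in> null_sets M" by (rule null_sets_UN)
  have "{x \<in> space M. x \<notin> supp_real M} \<subseteq> (\<Union>q. A q)"
  proof
    fix x assume "x \<in> {x \<in> space M. x \<notin> supp_real M}"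
    then obtain e where "e > 0" "\<not> 0 < measure M {x - e<..<x + e}"
      by (auto simp: supp_real_def)
    then have e: "e > 0" "measure M {x - e<..<x + e} = 0"
      using measure_nonneg[of M "{x - e<..<x + e}"] by linarith+
    obtain q1 where q1: "x - e < real_of_rat q1" "real_of_rat q1 < x"
      using of_rat_dense[of "x - e" x] e by auto
    obtain q2 where q2: "x < real_of_rat q2" "real_of_rat q2 < x + e"
      using of_rat_dense[of x "x + e"] e by auto
    have "measure M {real_of_rat q1<..<real_of_rat q2} \<le> measure M {x - e<..<x + e}"
      using q1 q2 sets_M by (intro finite_measure_mono) auto
    then have "measure M {real_of_rat q1<..<real_of_rat q2} = 0"
      using e(2) measure_nonneg[of M] by (simp add: order_antisym)
    then have "x \<in> A (q1, q2)" using q1 q2 by (simp add: A_def)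
    then show "x \<in> (\<Union>q. A q)" by blast
  qed
  then show ?thesis using null by (intro AE_I') auto
qed

lemma AE_pair_measure_fst_snd:
  assumes "sigma_finite_measure M2"
    and "AE x in M1. P x" "AE y in M2. Q y"
  shows "AE z in M1 \<Otimes>\<^sub>M M2. P (fst z) \<and> Q (snd z)"
proof -
  obtain N1 where N1: "{x \<in> space M1. \<not> P x} \<subseteq> N1" "N1 \<in> null_sets M1"
    using assms(2) by (auto elim!: AE_E)
  obtain N2 where N2: "{y \<in> space M2. \<not> Q y} \<subseteq> N2" "N2 \<in> null_sets M2"
    using assms(3) by (auto elim!: AE_E)
  have "N1 \<times> space M2 \<union> space M1 \<times> N2 \<in> null_sets (M1 \<Otimes>\<^sub>M M2)"
    using sigma_finite_measure.times_in_null_sets1[OF assms(1) N1(2) sets.top]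
      sigma_finite_measure.times_in_null_sets2[OF assms(1) sets.top N2(2)] by (rule null_sets.Un)
  moreover have "{z \<in> space (M1 \<Otimes>\<^sub>M M2). \<not> (P (fst z) \<and> Q (snd z))} \<subseteq> N1 \<times> space M2 \<union> space M1 \<times> N2"
    using N1(1) N2(1) by (auto simp: space_pair_measure)
  ultimately show ?thesis by (rule AE_I')
qed

lemma nn_integral_pair_measure_fst:
  assumes "prob_space M2" "f \<in> borel_measurable M1"
  shows "(\<integral>\<^sup>+z. f (fst z) \<partial>(M1 \<Otimes>\<^sub>M M2)) = (\<integral>\<^sup>+x. f x \<partial>M1)"
proof -
  interpret prob_space M2 by fact
  show ?thesis
    using nn_integral_fst[of "\<lambda>z. f (fst z)"] assms(2) by (simp add: emeasure_space_1)
qed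

lemma nn_integral_pair_measure_snd:
  assumes "prob_space M1" "prob_space M2" "f \<in> borel_measurable M2"
  shows "(\<integral>\<^sup>+z. f (snd z) \<partial>(M1 \<Otimes>\<^sub>M M2)) = (\<integral>\<^sup>+y. f y \<partial>M2)"
proof -
  interpret M1: prob_space M1 by fact
  interpret pair_sigma_finite M1 M2
    using assms by (simp add: pair_sigma_finite_def prob_space_imp_sigma_finite)
  show ?thesis
    using nn_integral_snd[of "\<lambda>z. f (snd z)"] assms(3) by (simp add: M1.emeasure_space_1)
qed

lemma nn_integral_PiM_nat_case_nat:
  assumes "prob_space M" and f: "f \<in> borel_measurable (PiM UNIV (\<lambda>_::nat. M))"
  shows "(\<integral>\<^sup>+\<omega>. f \<omega> \<partial>PiM UNIV (\<lambda>_::nat. M)) =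
    (\<integral>\<^sup>+s. (\<integral>\<^sup>+\<omega>. f (case_nat s \<omega>) \<partial>PiM UNIV (\<lambda>_::nat. M)) \<partial>M)"
proof -
  interpret sequence_space M
    using assms(1) by (simp add: sequence_space_def product_prob_space_def
        product_prob_space_axioms_def product_sigma_finite_def prob_space_imp_sigma_finite)
  have [measurable]: "(\<lambda>(s, \<omega>). case_nat s \<omega>) \<in> measurable (M \<Otimes>\<^sub>M S) S"
    by measurable
  have "(\<integral>\<^sup>+\<omega>. f \<omega> \<partial>S) = (\<integral>\<^sup>+z. f (case_nat (fst z) (snd z)) \<partial>(M \<Otimes>\<^sub>M S))"
    by (subst PiM_iter[symmetric]) (use f in \<open>simp add: nn_integral_distr case_prod_beta'\<close>)
  also have "\<dots> = (\<integral>\<^sup>+s. (\<integral>\<^sup>+\<omega>. f (case_nat s \<omega>) \<partial>S) \<partial>M)"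
    using f by (subst P.nn_integral_fst[symmetric]) simp_all
  finally show ?thesis .
qed

lemma nn_integral_uniform_coin:
  fixes p a b :: real
  assumes "0 \<le> p" "p \<le> 1" "0 < p \<Longrightarrow> 0 \<le> a" "p < 1 \<Longrightarrow> 0 \<le> b"
  shows "(\<integral>\<^sup>+x. ennreal (if x < p then a else b) \<partial>uniform_measure lborel {0..1})
    = ennreal (p * a + (1 - p) * b)"
proof -
  let ?U = "uniform_measure lborel {0..1::real}"
  have "(\<integral>\<^sup>+x. ennreal (if x < p then a else b) \<partial>?U)
      = (\<integral>\<^sup>+x. ennreal a * indicator {..<p} x + ennreal b * indicator {p..} x \<partial>?U)"
    by (intro nn_integral_cong) (auto split: split_indicator)
  also have "\<dots> = ennreal a * emeasure ?U {..<p} + ennreal b * emeasure ?U {p..}"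
    by (subst nn_integral_add) (simp_all add: nn_integral_cmult_indicator)
  also have "emeasure ?U {..<p} = ennreal p"
  proof -
    have "{0..1} \<inter> {..<p} = {0..<p}" using assms(2) by auto
    then show ?thesis using assms(1,2) by (simp add: divide_ennreal_def)
  qed
  also have "emeasure ?U {p..} = ennreal (1 - p)"
  proof -
    have "{0..1} \<inter> {p..} = {p..1}" using assms(1) by auto
    then show ?thesis using assms(1,2) by (simp add: divide_ennreal_def)
  qed
  finally show ?thesis
    using assms by (cases "p = 0"; cases "p = 1") (simp_all add: ennreal_mult' ennreal_plus mult.commute)
qed

lemma borel_measurable_poly_deg_le:
  assumes "poly_deg_le d f"
  shows "f \<in> borel_measurable (PiM UNIV (\<lambda>_::'a::finite. borel))"
proof -
  obtain c where c: "\<And>v. f v = (\<Sum>\<alpha>\<in>{\<alpha>. c \<alpha> \<noteq> 0}. c \<alpha> * (\<Prod>x\<in>UNIV. v x ^ \<alpha> x))"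
    using assms unfolding poly_deg_le_def by blast
  have "(\<lambda>v. \<Sum>\<alpha>\<in>{\<alpha>. c \<alpha> \<noteq> 0}. c \<alpha> * (\<Prod>x\<in>UNIV. v x ^ \<alpha> x))
      \<in> borel_measurable (PiM UNIV (\<lambda>_::'a. borel))"
    by (intro borel_measurable_sum borel_measurable_times borel_measurable_const
        borel_measurable_prod borel_measurable_power measurable_component_singleton) simp
  moreover have "f = (\<lambda>v. \<Sum>\<alpha>\<in>{\<alpha>. c \<alpha> \<noteq> 0}. c \<alpha> * (\<Prod>x\<in>UNIV. v x ^ \<alpha> x))"
    using c by blast
  ultimately show ?thesis by simp
qed

lemma ennreal_add_le:
  assumes "0 \<le> (a::real)"
  shows "ennreal (a + b) \<le> ennreal a + ennreal b"
proof (cases "0 \<le> b")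
  case False
  then have "ennreal (a + b) \<le> ennreal a" by (intro ennreal_leI) simp
  then show ?thesis by (simp add: add_increasing2)
qed (use assms in simp)

lemma e2ennreal_lim_incseq:
  fixes f :: "nat \<Rightarrow> real"
  assumes "incseq f"
  shows "e2ennreal (lim (\<lambda>n. ereal (f n))) = (SUP n. ennreal (f n))"
proof -
  have inc: "incseq (\<lambda>n. ereal (f n))" using assms by (simp add: incseq_def)
  have "lim (\<lambda>n. ereal (f n)) = (SUP n. ereal (f n))"
    using LIMSEQ_SUP[OF inc] by (rule limI)
  also have "e2ennreal \<dots> = (SUP n. e2ennreal (ereal (f n)))"
    using inc by (intro sup_continuousD sup_continuous_e2ennreal sup_continuous_id)
      (simp add: mono_iff_le_Suc incseq_Suc_iff)
  finally show ?thesis by simp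
qed

section \<open>Runs\<close>

definition sched_shift :: "(('l \<times> 'v val) list \<Rightarrow> 'l) \<Rightarrow> 'l \<times> 'v val \<Rightarrow> ('l \<times> 'v val) list \<Rightarrow> 'l" where
  "sched_shift \<sigma> c = (\<lambda>\<rho>. \<sigma> (c # \<rho>))"

text \<open>The coin is kept below 1 so that a probabilistic label with p = 1, whose second branch
  succs excludes, never takes it.\<close>
definition regular_steps :: "('r \<Rightarrow> real measure) \<Rightarrow> ('r val \<times> real) set" where
  "regular_steps D = {(u, x). (\<forall>r. u r \<in> supp_real (D r)) \<and> 0 \<le> x \<and> x < 1}"

definition partial_cost ::
  "('l \<Rightarrow> ('l, 'v, 'r) node) \<Rightarrow> 'l \<Rightarrow> (('l \<times> 'v val) list \<Rightarrow> 'l) \<Rightarrow> 'v val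
     \<Rightarrow> (nat \<Rightarrow> 'r val \<times> real) \<Rightarrow> nat \<Rightarrow> real" where
  "partial_cost G lin \<sigma> v \<omega> n = (\<Sum>m<n. step_cost G (conf G lin \<sigma> v \<omega> m))"

definition cost_process ::
  "('l \<Rightarrow> ('l, 'v, 'r) node) \<Rightarrow> ('l \<Rightarrow> 'v val \<Rightarrow> real) \<Rightarrow> 'l \<Rightarrow> (('l \<times> 'v val) list \<Rightarrow> 'l)
     \<Rightarrow> 'v val \<Rightarrow> (nat \<Rightarrow> 'r val \<times> real) \<Rightarrow> nat \<Rightarrow> real" where
  "cost_process G h lin \<sigma> v \<omega> n = partial_cost G lin \<sigma> v \<omega> n + case_prod h (conf G lin \<sigma> v \<omega> n)"

lemma hist_not_Nil: "hist G l \<sigma> w \<omega> n \<noteq> []"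
  by (cases n) auto

lemma conf_0: "conf G l \<sigma> w \<omega> 0 = (l, w)"
  by (simp add: conf_def)

lemma conf_Suc: "conf G l \<sigma> w \<omega> (Suc n) = next_conf G \<sigma> (hist G l \<sigma> w \<omega> n) (\<omega> n)"
  by (simp add: conf_def)

lemma next_conf_Cons: "\<rho> \<noteq> [] \<Longrightarrow> next_conf G \<sigma> (c # \<rho>) s = next_conf G (sched_shift \<sigma> c) \<rho> s"
  by (simp add: next_conf_def sched_shift_def)

lemma hist_Suc_shift:
  "hist G l \<sigma> w \<omega> (Suc n) = (l, w) # hist G (fst (next_conf G \<sigma> [(l, w)] (\<omega> 0)))
     (sched_shift \<sigma> (l, w)) (snd (next_conf G \<sigma> [(l, w)] (\<omega> 0))) (\<lambda>k. \<omega> (Suc k)) n"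
proof (induction n)
  case 0
  show ?case by simp
next
  case (Suc n)
  let ?c = "next_conf G \<sigma> [(l, w)] (\<omega> 0)"
  let ?H = "hist G (fst ?c) (sched_shift \<sigma> (l, w)) (snd ?c) (\<lambda>k. \<omega> (Suc k))"
  have "hist G l \<sigma> w \<omega> (Suc (Suc n))
      = ((l, w) # ?H n) @ [next_conf G \<sigma> ((l, w) # ?H n) (\<omega> (Suc n))]"
    by (simp only: hist.simps(2)[of _ _ _ _ _ "Suc n"] Suc)
  also have "\<dots> = (l, w) # (?H n @ [next_conf G (sched_shift \<sigma> (l, w)) (?H n) (\<omega> (Suc n))])"
    by (simp add: next_conf_Cons hist_not_Nil del: hist.simps)
  also have "\<dots> = (l, w) # ?H (Suc n)"
    by simp
  finally show ?case .
qed

lemma conf_Suc_shift: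
  "conf G l \<sigma> w \<omega> (Suc n) = conf G (fst (next_conf G \<sigma> [(l, w)] (\<omega> 0)))
     (sched_shift \<sigma> (l, w)) (snd (next_conf G \<sigma> [(l, w)] (\<omega> 0))) (\<lambda>k. \<omega> (Suc k)) n"
  unfolding conf_def by (subst hist_Suc_shift) (simp add: hist_not_Nil del: hist.simps)

lemma cost_process_0: "cost_process G h l \<sigma> w \<omega> 0 = h l w"
  by (simp add: cost_process_def partial_cost_def conf_0)

lemma cost_process_Suc:
  "cost_process G h l \<sigma> w \<omega> (Suc n) = step_cost G (l, w) +
     cost_process G h (fst (next_conf G \<sigma> [(l, w)] (\<omega> 0))) (sched_shift \<sigma> (l, w))
       (snd (next_conf G \<sigma> [(l, w)] (\<omega> 0))) (\<lambda>k. \<omega> (Suc k)) n"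
  unfolding cost_process_def partial_cost_def
  by (simp only: sum.lessThan_Suc_shift conf_0 conf_Suc_shift add.assoc)

lemma valid_sched_shift:
  assumes "valid_sched G \<sigma>"
  shows "valid_sched G (sched_shift \<sigma> c)"
  using assms unfolding valid_sched_def sched_shift_def
  by (metis last_ConsR list.distinct(1))

lemma next_conf_in_succs:
  assumes "valid_sched G \<sigma>" "\<rho> \<noteq> []" "s \<in> regular_steps D"
  shows "next_conf G \<sigma> \<rho> s \<in> succs G D (last \<rho>)"
  using assms
  by (cases "last \<rho>"; cases s; cases "G (fst (last \<rho>))")
     (auto simp: next_conf_def succs_def regular_steps_def valid_sched_def)

lemma reachable_refl: "reachable G D c c"
  by (simp add: reachable_def)

lemma reachable_succs: "reachable G D a b \<Longrightarrow> c \<in> succs G D b \<Longrightarrow> reachable G D a c"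
  by (auto simp: reachable_def intro: rtrancl_into_rtrancl)

lemma prob_space_samp: "wf_program G lout D \<Longrightarrow> prob_space (samp D)"
  unfolding samp_def by (rule prob_space_PiM) (auto simp: wf_program_def)

lemma prob_space_coin: "prob_space (uniform_measure lborel {0..1::real})"
  by (rule prob_space_uniform_measure) auto

lemma prob_space_step_space: "wf_program G lout D \<Longrightarrow> prob_space (step_space D)"
  unfolding step_space_def by (rule prob_space_pair[OF prob_space_samp prob_space_coin])

lemma prob_space_rand_space: "wf_program G lout D \<Longrightarrow> prob_space (rand_space D)"
  unfolding rand_space_def by (rule prob_space_PiM) (auto intro: prob_space_step_space)

lemma AE_samp_in_supp:
  assumes "wf_program G lout D"
  shows "AE u in samp D. \<forall>r. u r \<in> supp_real (D r)"
proof (rule eventually_all_finite)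
  fix r
  show "AE u in samp D. u r \<in> supp_real (D r)"
    unfolding samp_def
    by (rule AE_PiM_component) (use assms AE_in_supp_real in \<open>auto simp: wf_program_def\<close>)
qed

lemma AE_regular_step:
  assumes "wf_program G lout D"
  shows "AE s in step_space D. s \<in> regular_steps D"
proof -
  have "AE x in uniform_measure lborel {0..1::real}. 0 \<le> x \<and> x < 1"
    by (rule AE_uniform_measureI) (auto intro: eventually_mono[OF AE_lborel_singleton[of 1]])
  then have "AE s in step_space D. (\<forall>r. fst s r \<in> supp_real (D r)) \<and> (0 \<le> snd s \<and> snd s < 1)"
    unfolding step_space_def
    by (rule AE_pair_measure_fst_snd[OF prob_space_imp_sigma_finite[OF prob_space_coin]
          AE_samp_in_supp[OF assms]])
  then show ?thesis
    by eventually_elim (auto simp: regular_steps_def)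
qed

lemma AE_reachable_conf:
  assumes "wf_program G lout D" "valid_sched G \<sigma>"
  shows "AE \<omega> in rand_space D. \<forall>n. reachable G D (lin, v) (conf G lin \<sigma> v \<omega> n)"
proof -
  have "AE \<omega> in rand_space D. \<forall>n. \<omega> n \<in> regular_steps D"
    unfolding rand_space_def AE_all_countable
    by (intro allI AE_PiM_component) (use assms prob_space_step_space AE_regular_step in auto)
  then show ?thesis
  proof eventually_elim
    case (elim \<omega>)
    show ?case
    proof
      fix n
      show "reachable G D (lin, v) (conf G lin \<sigma> v \<omega> n)"
      proof (induction n)
        case 0
        show ?case by (simp add: conf_0 reachable_refl)
      next
        case (Suc n)
        have "conf G lin \<sigma> v \<omega> (Suc n) \<in> succs G D (conf G lin \<sigma> v \<omega> n)"
          using next_conf_in_succs[OF assms(2) hist_not_Nil elim[rule_format, of n]]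
          by (simp add: conf_Suc conf_def)
        then show ?case by (rule reachable_succs[OF Suc.IH])
      qed
    qed
  qed
qed

lemma measurable_snd_conf:
  assumes "admissible G D lin \<sigma> v"
  shows "(\<lambda>\<omega>. snd (conf G lin \<sigma> v \<omega> n)) \<in> measurable (rand_space D) (PiM UNIV (\<lambda>_. borel))"
proof -
  have "(\<lambda>\<omega> x. snd (conf G lin \<sigma> v \<omega> n) x) \<in> measurable (rand_space D) (PiM UNIV (\<lambda>_. borel))"
    using assms unfolding admissible_def by (intro measurable_PiM_single') auto
  then show ?thesis by simp
qed

lemma borel_measurable_conf:
  fixes G :: "'l::countable \<Rightarrow> ('l, 'v, 'r) node"
  assumes "admissible G D lin \<sigma> v" and "\<And>l. f l \<in> borel_measurable (PiM UNIV (\<lambda>_. borel))"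
  shows "(\<lambda>\<omega>. case_prod f (conf G lin \<sigma> v \<omega> n)) \<in> borel_measurable (rand_space D)"
proof -
  have "(\<lambda>\<omega>. f (fst (conf G lin \<sigma> v \<omega> n)) (snd (conf G lin \<sigma> v \<omega> n))) \<in> borel_measurable (rand_space D)"
  proof (rule measurable_compose_countable[where f="\<lambda>l \<omega>. f l (snd (conf G lin \<sigma> v \<omega> n))"])
    show "(\<lambda>\<omega>. fst (conf G lin \<sigma> v \<omega> n)) \<in> measurable (rand_space D) (count_space UNIV)"
      using assms(1) by (simp add: admissible_def)
    show "(\<lambda>\<omega>. f l (snd (conf G lin \<sigma> v \<omega> n))) \<in> borel_measurable (rand_space D)" for l
      by (rule measurable_compose[OF measurable_snd_conf[OF assms(1)] assms(2)])
  qed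
  then show ?thesis by (simp add: case_prod_beta)
qed

lemma borel_measurable_step_cost:
  assumes "wf_program G lout D"
  shows "(\<lambda>w. step_cost G (l, w)) \<in> borel_measurable (PiM UNIV (\<lambda>_. borel))"
proof (cases "G l")
  case (Tick R l')
  then have "is_poly R"
    using assms unfolding wf_program_def by blast
  then obtain d where "poly_deg_le d R"
    by (auto simp: is_poly_def)
  then show ?thesis
    using Tick by (simp add: step_cost_def borel_measurable_poly_deg_le)
qed (simp_all add: step_cost_def)

section \<open>The expected cost bound\<close>

context
  fixes G :: "'l::finite \<Rightarrow> ('l, 'v::finite, 'r::finite) node"
    and lin lout :: 'l
    and D :: "'r \<Rightarrow> real measure"
    and I :: "'l \<Rightarrow> 'v val set"
    and h :: "'l \<Rightarrow> 'v val \<Rightarrow> real"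
    and d :: nat
    and v :: "'v val"
  assumes wf: "wf_program G lout D"
    and inv: "linear_invariant G D lin I"
    and integrable_h: "\<forall>l l' F w. G l = Assign l' F \<longrightarrow> integrable (samp D) (\<lambda>u. h l' (F w u))"
    and pucs: "PUCS G D I lout d h"
    and h_nonneg: "\<forall>l. \<forall>w\<in>I l. 0 \<le> h l w"
    and cost_nonneg: "\<forall>l R l'. G l = Tick R l' \<longrightarrow> (\<forall>w\<in>I l. 0 \<le> R w)"
    and v_in_I: "v \<in> I lin"
begin

lemma reachable_in_invariant: "reachable G D (lin, v) (l, w) \<Longrightarrow> w \<in> I l"
  using inv v_in_I by (auto simp: linear_invariant_def)

lemma step_cost_nonneg_reachable: "reachable G D (lin, v) c \<Longrightarrow> 0 \<le> step_cost G c"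
  using reachable_in_invariant[of "fst c" "snd c"]
  by (cases c) (auto simp: step_cost_def split: node.split intro: cost_nonneg[rule_format])

lemma h_nonneg_reachable: "reachable G D (lin, v) c \<Longrightarrow> 0 \<le> case_prod h c"
  using reachable_in_invariant[of "fst c" "snd c"] h_nonneg by (auto simp: case_prod_beta)

lemma nn_integral_step_le:
  assumes reach: "reachable G D (lin, v) (l, w)" and sched: "valid_sched G \<sigma>"
  shows "(\<integral>\<^sup>+s. ennreal (step_cost G (l, w) + case_prod h (next_conf G \<sigma> [(l, w)] s)) \<partial>step_space D)
    \<le> ennreal (h l w)"
proof -
  have pre_le: "G l \<noteq> Out \<Longrightarrow> pre G D h l w \<le> h l w"
    using pucs reachable_in_invariant[OF reach] wf by (auto simp: PUCS_def wf_program_def)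
  have succ_nonneg: "(l', w') \<in> succs G D (l, w) \<Longrightarrow> 0 \<le> h l' w'" for l' w'
    using h_nonneg_reachable[OF reachable_succs[OF reach]] by fastforce
  have space_1: "emeasure (step_space D) (space (step_space D)) = 1"
    using prob_space.emeasure_space_1[OF prob_space_step_space[OF wf]] .
  show ?thesis
  proof (cases "G l")
    case (Assign l' F)
    have int: "integrable (samp D) (\<lambda>u. h l' (F w u))"
      using integrable_h Assign by blast
    have "(\<integral>\<^sup>+s. ennreal (step_cost G (l, w) + case_prod h (next_conf G \<sigma> [(l, w)] s)) \<partial>step_space D)
        = (\<integral>\<^sup>+s. ennreal (h l' (F w (fst s))) \<partial>step_space D)"
      using Assign by (simp add: next_conf_def step_cost_def case_prod_beta)
    also have "\<dots> = (\<integral>\<^sup>+u. ennreal (h l' (F w u)) \<partial>samp D)"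
      unfolding step_space_def
      by (rule nn_integral_pair_measure_fst[OF prob_space_coin
            measurable_compose[OF borel_measurable_integrable[OF int] measurable_ennreal]])
    also have "\<dots> = ennreal (\<integral>u. h l' (F w u) \<partial>samp D)"
      using AE_samp_in_supp[OF wf]
      by (intro nn_integral_eq_integral[OF int])
         (auto elim!: eventually_mono intro!: succ_nonneg simp: succs_def Assign)
    also have "\<dots> \<le> ennreal (h l w)"
      using pre_le Assign by (intro ennreal_leI) (simp add: pre_def)
    finally show ?thesis .
  next
    case (Prob p l1 l2)
    have p: "0 \<le> p" "p \<le> 1"
      using wf Prob unfolding wf_program_def by blast+
    have "(\<integral>\<^sup>+s. ennreal (step_cost G (l, w) + case_prod h (next_conf G \<sigma> [(l, w)] s)) \<partial>step_space D)
        = (\<integral>\<^sup>+s. ennreal (if snd s < p then h l1 w else h l2 w) \<partial>step_space D)"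
      using Prob by (intro nn_integral_cong) (simp add: next_conf_def step_cost_def case_prod_beta)
    also have "\<dots> = (\<integral>\<^sup>+x. ennreal (if x < p then h l1 w else h l2 w) \<partial>uniform_measure lborel {0..1})"
      unfolding step_space_def
      by (rule nn_integral_pair_measure_snd[OF prob_space_samp[OF wf] prob_space_coin]) measurable
    also have "\<dots> = ennreal (pre G D h l w)"
      using p Prob by (subst nn_integral_uniform_coin) (auto intro!: succ_nonneg simp: succs_def pre_def)
    also have "\<dots> \<le> ennreal (h l w)"
      using pre_le Prob by (intro ennreal_leI) simp
    finally show ?thesis .
  next
    case (NDet l1 l2)
    then have "\<sigma> [(l, w)] \<in> {l1, l2}"
      using sched by (auto simp: valid_sched_def)
    then show ?thesis
      using NDet pre_le by (auto simp: next_conf_def step_cost_def pre_def space_1 intro!: ennreal_leI)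
  qed (use pre_le in \<open>auto simp: next_conf_def step_cost_def pre_def space_1 intro!: ennreal_leI\<close>)
qed


text \<open>The measurability hypothesis is carried along because admissibility of \<open>\<sigma>\<close> says nothing
  about the shifted schedulers that appear after conditioning on the first step.\<close>
lemma nn_integral_cost_process_le:
  assumes "reachable G D (lin, v) (l, w)" "valid_sched G \<sigma>"
    and "(\<lambda>\<omega>. cost_process G h l \<sigma> w \<omega> n) \<in> borel_measurable (rand_space D)"
  shows "(\<integral>\<^sup>+\<omega>. ennreal (cost_process G h l \<sigma> w \<omega> n) \<partial>rand_space D) \<le> ennreal (h l w)"
  using assms
proof (induction n arbitrary: l w \<sigma>)
  case 0
  then show ?case
    using prob_space.emeasure_space_1[OF prob_space_rand_space[OF wf]] by (simp add: cost_process_0)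
next
  case (Suc n)
  define c where "c s = next_conf G \<sigma> [(l, w)] s" for s
  define \<sigma>' where "\<sigma>' = sched_shift \<sigma> (l, w)"
  define C where "C = step_cost G (l, w)"
  let ?S = "\<lambda>s \<omega>. cost_process G h (fst (c s)) \<sigma>' (snd (c s)) \<omega> n"
  have process_Suc: "cost_process G h l \<sigma> w (case_nat s \<omega>) (Suc n) = C + ?S s \<omega>" for s \<omega>
    by (simp add: cost_process_Suc c_def \<sigma>'_def C_def)
  have C_nonneg: "0 \<le> C"
    using step_cost_nonneg_reachable[OF Suc.prems(1)] by (simp add: C_def)
  have "(\<integral>\<^sup>+\<omega>. ennreal (cost_process G h l \<sigma> w \<omega> (Suc n)) \<partial>rand_space D)
      = (\<integral>\<^sup>+s. (\<integral>\<^sup>+\<omega>. ennreal (C + ?S s \<omega>) \<partial>rand_space D) \<partial>step_space D)"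
    unfolding process_Suc[symmetric] rand_space_def
    by (rule nn_integral_PiM_nat_case_nat[OF prob_space_step_space[OF wf]
          measurable_compose[OF Suc.prems(3)[unfolded rand_space_def] measurable_ennreal]])
  also have "\<dots> \<le> (\<integral>\<^sup>+s. ennreal (C + case_prod h (c s)) \<partial>step_space D)"
  proof (rule nn_integral_mono_AE)
    show "AE s in step_space D.
        (\<integral>\<^sup>+\<omega>. ennreal (C + ?S s \<omega>) \<partial>rand_space D) \<le> ennreal (C + case_prod h (c s))"
      using AE_regular_step[OF wf] AE_space
    proof eventually_elim
      case (elim s)
      have "c s \<in> succs G D (l, w)"
        using next_conf_in_succs[OF Suc.prems(2) _ elim(1), of "[(l, w)]"] by (simp add: c_def)
      then have reach: "reachable G D (lin, v) (fst (c s), snd (c s))"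
        using reachable_succs[OF Suc.prems(1)] by simp
      have "(\<lambda>\<omega>. case_nat s \<omega>) \<in> measurable (rand_space D) (rand_space D)"
        using elim(2) unfolding rand_space_def by measurable
      then have "(\<lambda>\<omega>. cost_process G h l \<sigma> w (case_nat s \<omega>) (Suc n)) \<in> borel_measurable (rand_space D)"
        by (rule measurable_compose[OF _ Suc.prems(3)])
      then have "(\<lambda>\<omega>. C + ?S s \<omega>) \<in> borel_measurable (rand_space D)"
        by (simp only: process_Suc)
      then have "(\<lambda>\<omega>. (C + ?S s \<omega>) - C) \<in> borel_measurable (rand_space D)"
        by (rule borel_measurable_diff[OF _ borel_measurable_const])
      then have S_meas: "?S s \<in> borel_measurable (rand_space D)"
        by simp
      have "(\<integral>\<^sup>+\<omega>. ennreal (C + ?S s \<omega>) \<partial>rand_space D)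
          \<le> (\<integral>\<^sup>+\<omega>. ennreal C + ennreal (?S s \<omega>) \<partial>rand_space D)"
        by (intro nn_integral_mono ennreal_add_le C_nonneg)
      also have "\<dots> = ennreal C + (\<integral>\<^sup>+\<omega>. ennreal (?S s \<omega>) \<partial>rand_space D)"
        using S_meas prob_space.emeasure_space_1[OF prob_space_rand_space[OF wf]]
        by (subst nn_integral_add) auto
      also have "\<dots> \<le> ennreal C + ennreal (h (fst (c s)) (snd (c s)))"
        using Suc.IH[OF reach valid_sched_shift[OF Suc.prems(2)] S_meas[unfolded \<sigma>'_def]]
        by (simp add: \<sigma>'_def add_left_mono)
      also have "\<dots> = ennreal (C + case_prod h (c s))"
        using C_nonneg h_nonneg_reachable[OF reach] by (simp add: case_prod_beta)
      finally show ?case .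
    qed
  qed
  also have "\<dots> \<le> ennreal (h l w)"
    using nn_integral_step_le[OF Suc.prems(1,2)] by (simp add: C_def c_def)
  finally show ?case .
qed


lemma expected_total_cost_le:
  assumes sched: "valid_sched G \<sigma>" and adm: "admissible G D lin \<sigma> v"
  shows "ereal_expect (rand_space D) (total_cost G lin \<sigma> v) \<le> ereal (h lin v)"
proof -
  let ?P = "partial_cost G lin \<sigma> v"
  have reach: "AE \<omega> in rand_space D. \<forall>n. reachable G D (lin, v) (conf G lin \<sigma> v \<omega> n)"
    by (rule AE_reachable_conf[OF wf sched])
  have P_meas: "(\<lambda>\<omega>. ?P \<omega> n) \<in> borel_measurable (rand_space D)" for n
    using borel_measurable_conf[OF adm, where f="\<lambda>l w. step_cost G (l, w)"]
      borel_measurable_step_cost[OF wf]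
    unfolding partial_cost_def by (intro borel_measurable_sum) (simp add: case_prod_beta)
  have h_meas: "(\<lambda>\<omega>. case_prod h (conf G lin \<sigma> v \<omega> n)) \<in> borel_measurable (rand_space D)" for n
    using pucs by (intro borel_measurable_conf[OF adm] borel_measurable_poly_deg_le) (auto simp: PUCS_def)
  have P_Suc: "AE \<omega> in rand_space D. \<forall>n. ?P \<omega> n \<le> ?P \<omega> (Suc n)"
    using reach by eventually_elim (simp add: partial_cost_def step_cost_nonneg_reachable)
  have bound: "(\<integral>\<^sup>+\<omega>. ennreal (?P \<omega> n) \<partial>rand_space D) \<le> ennreal (h lin v)" for n
  proof -
    have "(\<integral>\<^sup>+\<omega>. ennreal (?P \<omega> n) \<partial>rand_space D)
        \<le> (\<integral>\<^sup>+\<omega>. ennreal (cost_process G h lin \<sigma> v \<omega> n) \<partial>rand_space D)"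
      using reach
      by (intro nn_integral_mono_AE)
         (auto elim!: eventually_mono intro!: ennreal_leI h_nonneg_reachable simp: cost_process_def)
    also have "\<dots> \<le> ennreal (h lin v)"
      using P_meas h_meas
      by (intro nn_integral_cost_process_le reachable_refl sched) (simp add: cost_process_def)
    finally show ?thesis .
  qed
  have "(\<integral>\<^sup>+\<omega>. e2ennreal (total_cost G lin \<sigma> v \<omega>) \<partial>rand_space D)
      = (\<integral>\<^sup>+\<omega>. (SUP n. ennreal (?P \<omega> n)) \<partial>rand_space D)"
    using P_Suc
  proof (intro nn_integral_cong_AE, eventually_elim)
    case (elim \<omega>)
    have "total_cost G lin \<sigma> v \<omega> = lim (\<lambda>n. ereal (?P \<omega> n))"
      by (simp add: total_cost_def partial_cost_def)
    then show ?case
      using e2ennreal_lim_incseq[OF incseq_SucI] elim by simp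
  qed
  also have "\<dots> = (SUP n. \<integral>\<^sup>+\<omega>. ennreal (?P \<omega> n) \<partial>rand_space D)"
    using P_Suc P_meas
    by (intro nn_integral_monotone_convergence_SUP_AE) (auto elim!: eventually_mono intro: ennreal_leI)
  also have "\<dots> \<le> ennreal (h lin v)"
    using bound by (rule SUP_least)
  finally have "(\<integral>\<^sup>+\<omega>. e2ennreal (total_cost G lin \<sigma> v \<omega>) \<partial>rand_space D) \<le> ennreal (h lin v)" .
  then have "enn2ereal (\<integral>\<^sup>+\<omega>. e2ennreal (total_cost G lin \<sigma> v \<omega>) \<partial>rand_space D)
      \<le> enn2ereal (ennreal (h lin v))"
    by (simp add: less_eq_ennreal.rep_eq[symmetric])
  also have "\<dots> = ereal (h lin v)"
    using h_nonneg_reachable[OF reachable_refl] by simp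
  finally show ?thesis
    unfolding ereal_expect_def by (rule order_trans[OF ereal_diff_le_self, rotated]) simp
qed

end

theorem theorem6p9:
  fixes G :: "'l::finite \<Rightarrow> ('l, 'v::finite, 'r::finite) node"
    and lin lout :: 'l
    and D :: "'r \<Rightarrow> real measure"
    and I :: "'l \<Rightarrow> 'v val set"
    and h :: "'l \<Rightarrow> 'v val \<Rightarrow> real"
    and d :: nat
    and v :: "'v val"
  assumes "wf_program G lout D"
    and "linear_invariant G D lin I"
    and "\<forall>l l' F w. G l = Assign l' F \<longrightarrow> integrable (samp D) (\<lambda>u. h l' (F w u))"
    and "PUCS G D I lout d h"
    and "\<forall>l. \<forall>w\<in>I l. 0 \<le> h l w"
    and "\<forall>l R l'. G l = Tick R l' \<longrightarrow> (\<forall>w\<in>I l. 0 \<le> R w)"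
    and "v \<in> I lin"
  shows "supval G D lin v \<le> ereal (h lin v)"
  unfolding supval_def
  by (rule SUP_least) (use expected_total_cost_le[OF assms] in blast)

end
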